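(* For any natural numbers $d \ge 1$ and $n>1$ there exists a natural number $t$ (depending only on $d$ and $n$) with the following property: for every finite geometric simplicial complex $\mathcal{T}$ in $\mathbb{R}^d$ all of whose vertices lie in the integer lattice $\mathbb{Z}^d$, the number of points of $\mathbb{Z}^d$ lying in $t\,|\mathcal{T}|$ is congruent to $\chi(\mathcal{T})$ modulo $n$.
   Context: A finite geometric simplicial complex $\mathcal{T}$ in $\mathbb{R}^d$ is a finite collection of (closed, geometric) simplices in $\mathbb{R}^d$ that is closed under taking faces and such that any two of its simplices intersect in a common face (possibly empty). Its underlying space $|\mathcal{T}|$ is the union of its simplices. $\chi(\mathcal{T})$ denotes the Euler characteristic of $\mathcal{T}$, i.e. $\sum_{k\ge 0}(-1)^k f_k$, where $f_k$ is the number of $k$-dimensional simplices of $\mathcal{T}$. For a set $X\subseteq\mathbb{R}^d$ and $t>0$, $tX=\{tx : x\in X\}$ is the image of $X$ under the homothety with center at the origin and ratio $t$. *)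

theory Defs
  imports "HOL-Analysis.Analysis"
begin

text \<open>A geometric simplex is represented by its (nonempty, affinely independent)
vertex set V; the simplex itself is convex hull V.\<close>

definition geom_simplicial_complex :: "('a::euclidean_space) set set \<Rightarrow> bool" where
  "geom_simplicial_complex K \<longleftrightarrow>
     finite K \<and>
     (\<forall>V\<in>K. V \<noteq> {} \<and> \<not> affine_dependent V) \<and>
     (\<forall>V\<in>K. \<forall>W. W \<subseteq> V \<and> W \<noteq> {} \<longrightarrow> W \<in> K) \<and>
     (\<forall>V\<in>K. \<forall>W\<in>K. convex hull V \<inter> convex hull W = convex hull (V \<inter> W))"

definition underlying_space :: "('a::euclidean_space) set set \<Rightarrow> 'a set" where
  "underlying_space K = (\<Union>V\<in>K. convex hull V)"

definition euler_char :: "'a set set \<Rightarrow> int" where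
  "euler_char K = (\<Sum>V\<in>K. (-1) ^ (card V - 1))"

definition int_lattice :: "(real^'n) set" where
  "int_lattice = {x. \<forall>i. x $ i \<in> \<int>}"

end

theory Submission
  imports Defs
begin

text \<open>
  Lattice points in dilates of a lattice simplicial complex count the Euler characteristic
  modulo \<open>n\<close>, for the dilation factor \<open>t = n \<cdot> d!\<close>.

  The underlying space \<open>|K|\<close> is the disjoint union of the relative interiors of the simplices
  of \<open>K\<close>, so it suffices to show that the dilated open simplex \<open>t \<cdot> relint (conv V)\<close> of a
  lattice simplex with \<open>k + 1\<close> vertices contains \<open>(-1)^k\<close> lattice points modulo \<open>n\<close>.  Such
  points correspond, via barycentric coordinates scaled by \<open>t\<close>, to positive weights on \<open>V\<close>
  of total \<open>t\<close> whose vertex combination is a lattice point.  Splitting each weight into its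
  part in \<open>(0,1]\<close> and its natural part expresses the count as \<open>\<Sum>\<^sub>\<mu> C(t + k - h(\<mu>), k)\<close>, the
  sum ranging over the finitely many fundamental weights \<open>\<mu>\<close> of height \<open>h(\<mu>) \<in> {1..k+1}\<close>.
  Since \<open>n \<cdot> k!\<close> divides \<open>t\<close>, these binomial coefficients vanish modulo \<open>n\<close> except for
  \<open>h = k + 1\<close>, which is attained only by the all-ones weight and contributes \<open>(-1)^k\<close>.
\<close>

text \<open>They count the lattice weights lying
  over a fixed fundamental weight.\<close>

definition weak_compositions :: "'a set \<Rightarrow> nat \<Rightarrow> ('a \<Rightarrow> nat) set" where
  "weak_compositions A s = {m \<in> A \<rightarrow>\<^sub>E UNIV. sum m A = s}"

lemma finite_weak_compositions:
  assumes "finite A"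
  shows "finite (weak_compositions A s)"
proof -
  have "weak_compositions A s \<subseteq> A \<rightarrow>\<^sub>E {..s}"
    unfolding weak_compositions_def using member_le_sum[OF _ _ assms] by fastforce
  then show ?thesis using assms by (meson finite_PiE finite_atMost finite_subset)
qed

lemma weak_compositions_bij_lists:
  assumes e: "bij_betw e {0..<k} A"
  shows "bij_betw (\<lambda>m. map (m \<circ> e) [0..<k]) (weak_compositions A s)
           {l. length l = k \<and> sum_list l = s}"
proof -
  define i where "i = inv_into {0..<k} e"
  have ie: "\<And>a. a \<in> A \<Longrightarrow> i a < k \<and> e (i a) = a"
    using e unfolding i_def by (auto simp: bij_betw_def f_inv_into_f inv_into_into)
  have ei: "\<And>j. j < k \<Longrightarrow> i (e j) = j"
    using e unfolding i_def by (simp add: bij_betw_def inv_into_f_f)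
  have eA: "\<And>j. j < k \<Longrightarrow> e j \<in> A"
    using e by (auto simp: bij_betw_def)
  have sum_e: "sum f A = (\<Sum>j<k. f (e j))" for f :: "'a \<Rightarrow> nat"
    using sum.reindex_bij_betw[OF e, of f] by (simp add: atLeast0LessThan)
  show ?thesis
  proof (rule bij_betw_byWitness[where f'="\<lambda>l. \<lambda>a\<in>A. l ! i a"])
    show "\<forall>m\<in>weak_compositions A s. (\<lambda>a\<in>A. map (m \<circ> e) [0..<k] ! i a) = m"
    proof (intro ballI ext)
      fix m a assume "m \<in> weak_compositions A s"
      then have m: "m \<in> A \<rightarrow>\<^sub>E UNIV" by (simp add: weak_compositions_def)
      show "(\<lambda>a\<in>A. map (m \<circ> e) [0..<k] ! i a) a = m a"
      proof (cases "a \<in> A")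
        case True
        then show ?thesis using ie[OF True] by simp
      next
        case False
        then show ?thesis using PiE_arb[OF m False] by simp
      qed
    qed
    show "\<forall>l\<in>{l. length l = k \<and> sum_list l = s}. map ((\<lambda>a\<in>A. l ! i a) \<circ> e) [0..<k] = l"
    proof (intro ballI nth_equalityI)
      fix l :: "nat list" and j
      assume "l \<in> {l. length l = k \<and> sum_list l = s}"
        and "j < length (map ((\<lambda>a\<in>A. l ! i a) \<circ> e) [0..<k])"
      then show "map ((\<lambda>a\<in>A. l ! i a) \<circ> e) [0..<k] ! j = l ! j"
        using eA ei by simp
    qed simp
    show "(\<lambda>m. map (m \<circ> e) [0..<k]) ` weak_compositions A s \<subseteq> {l. length l = k \<and> sum_list l = s}"
      by (auto simp: weak_compositions_def sum_e sum_list_sum_nth atLeast0LessThan)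
    show "(\<lambda>l. \<lambda>a\<in>A. l ! i a) ` {l. length l = k \<and> sum_list l = s} \<subseteq> weak_compositions A s"
    proof (rule image_subsetI)
      fix l :: "nat list" assume "l \<in> {l. length l = k \<and> sum_list l = s}"
      then have l: "length l = k" "sum_list l = s" by simp_all
      have "(\<Sum>a\<in>A. (\<lambda>a\<in>A. l ! i a) a) = (\<Sum>j<k. (\<lambda>a\<in>A. l ! i a) (e j))"
        by (rule sum_e)
      also have "\<dots> = (\<Sum>j<k. l ! j)"
        using eA ei by (intro sum.cong) auto
      finally show "(\<lambda>a\<in>A. l ! i a) \<in> weak_compositions A s"
        using l by (simp add: weak_compositions_def sum_list_sum_nth atLeast0LessThan)
    qed
  qed
qed

text \<open>Stars and bars, transferred from the library's count of lists of naturals with a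
  given length and sum.\<close>

lemma card_weak_compositions:
  assumes "finite A" "A \<noteq> {}"
  shows "card (weak_compositions A s) = (s + card A - 1) choose s"
proof -
  obtain e where "bij_betw e {0..<card A} A" using ex_bij_betw_nat_finite[OF assms(1)] by blast
  then have "card (weak_compositions A s) = card {l. length l = card A \<and> sum_list l = s}"
    by (rule bij_betw_same_card[OF weak_compositions_bij_lists])
  then show ?thesis using card_length_sum_list[of "card A" s] by simp
qed

lemma sum_mod_cong:
  fixes f g :: "'a \<Rightarrow> 'b::euclidean_semiring_cancel"
  assumes "\<And>x. x \<in> A \<Longrightarrow> f x mod m = g x mod m"
  shows "sum f A mod m = sum g A mod m"
proof -
  have "sum f A mod m = (\<Sum>x\<in>A. f x mod m) mod m" by (simp only: mod_sum_eq)
  also have "\<dots> = (\<Sum>x\<in>A. g x mod m) mod m" using assms by (simp cong: sum.cong)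
  also have "\<dots> = sum g A mod m" by (simp only: mod_sum_eq)
  finally show ?thesis .
qed

lemma fact_times_choose_int:
  "fact k * int (a choose k) = (\<Prod>i<k. int a - int i)"
proof -
  have "(fact k * real (a choose k)) = (\<Prod>i<k. real a - real i)"
    by (simp add: binomial_gbinomial gbinomial_mult_fact atLeast0LessThan)
  then have "real_of_int (fact k * int (a choose k)) = real_of_int (\<Prod>i<k. int a - int i)"
    by simp
  then show ?thesis by (simp only: of_int_eq_iff)
qed

text \<open>If \<open>n \<cdot> k!\<close> divides \<open>N > 0\<close> then, modulo \<open>n\<close>,
  \<open>C(N + k - h, k)\<close> vanishes for \<open>1 \<le> h \<le> k\<close> and is \<open>(-1)^k\<close> for \<open>h = k + 1\<close>:
  \<open>k! C(N + k - h, k)\<close> is a product of \<open>k\<close> consecutive integers, congruent modulo \<open>N\<close>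
  to \<open>\<Prod>i<k. (k - h - i)\<close>, which is \<open>0\<close> resp. \<open>(-1)^k k!\<close>; cancelling \<open>k!\<close> leaves
  a congruence modulo \<open>n\<close>.\<close>

lemma binomial_congruence:
  fixes n k h N :: nat
  assumes h: "1 \<le> h" "h \<le> k + 1" and dvd: "n * fact k dvd N" and N: "N > 0"
  shows "int ((N + k - h) choose k) mod int n = (if h = k + 1 then (-1)^k else 0) mod int n"
proof -
  define e :: int where "e = (if h = k + 1 then (-1)^k else 0)"
  have "fact k * int ((N + k - h) choose k) = (\<Prod>i<k. int N + (int k - int h - int i))"
    unfolding fact_times_choose_int using h N by (intro prod.cong) auto
  also have "\<dots> mod int N = (\<Prod>i<k. int k - int h - int i) mod int N"
    by (subst mod_prod_eq[symmetric]) (simp add: mod_prod_eq)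
  also have "(\<Prod>i<k. int k - int h - int i) = fact k * e"
  proof (cases "h = k + 1")
    case True
    have "(\<Prod>i<k. int k - int h - int i) = (\<Prod>i<k. - int (Suc i))"
      using True by (intro prod.cong) auto
    also have "\<dots> = (\<Prod>i<k. (-1) * int (Suc i))" by simp
    also have "\<dots> = (-1)^k * fact k"
      by (simp only: prod.distrib prod_constant card_lessThan fact_prod_Suc atLeast0LessThan of_nat_prod)
    finally show ?thesis using True by (simp add: e_def)
  next
    case False
    then have "k - h \<in> {..<k}" using h by auto
    moreover have "int k - int h - int (k - h) = 0" using h False by simp
    ultimately have "(\<Prod>i<k. int k - int h - int i) = 0" by (intro prod_zero) blast+
    then show ?thesis using False by (simp add: e_def)
  qed
  finally have "int N dvd fact k * (int ((N + k - h) choose k) - e)"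
    by (simp add: mod_eq_dvd_iff right_diff_distrib)
  moreover have "fact k * int n dvd int N"
    using dvd by (metis int_dvd_int_iff mult.commute of_nat_fact of_nat_mult)
  ultimately have "fact k * int n dvd fact k * (int ((N + k - h) choose k) - e)"
    by (rule dvd_trans[rotated])
  then have "int n dvd int ((N + k - h) choose k) - e" by simp
  then show ?thesis unfolding e_def by (simp add: mod_eq_dvd_iff)
qed

lemma barycentric_coords_unique:
  fixes V :: "'a::real_vector set"
  assumes "finite V" "\<not> affine_dependent V" "sum a V = sum b V"
    "(\<Sum>v\<in>V. a v *\<^sub>R v) = (\<Sum>v\<in>V. b v *\<^sub>R v)" "v \<in> V"
  shows "a v = b v"
proof (rule ccontr)
  assume "a v \<noteq> b v"
  moreover have "sum (\<lambda>w. a w - b w) V = 0" using assms(3) by (simp add: sum_subtractf)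
  moreover have "(\<Sum>w\<in>V. (a w - b w) *\<^sub>R w) = 0"
    using assms(4) by (simp add: scaleR_diff_left sum_subtractf)
  ultimately have "affine_dependent V"
    unfolding affine_dependent_explicit_finite[OF assms(1)] using assms(5) by force
  then show False using assms(2) by simp
qed

text \<open>A simplex is the union of the relative interiors of its faces: a point lies in the
  open face spanned by the support of its barycentric coordinates.\<close>

lemma convex_hull_Union_rel_interior_faces:
  fixes V :: "'a::euclidean_space set"
  assumes indep: "\<not> affine_dependent V"
  shows "convex hull V = (\<Union>W\<in>{W. W \<subseteq> V \<and> W \<noteq> {}}. rel_interior (convex hull W))"
proof
  have fin: "finite V" using indep by (rule aff_independent_finite)
  show "convex hull V \<subseteq> (\<Union>W\<in>{W. W \<subseteq> V \<and> W \<noteq> {}}. rel_interior (convex hull W))"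
  proof
    fix x assume "x \<in> convex hull V"
    then obtain u where u0: "\<forall>v\<in>V. 0 \<le> u v" and u1: "sum u V = 1"
      and ux: "(\<Sum>v\<in>V. u v *\<^sub>R v) = x"
      unfolding convex_hull_finite[OF fin] by auto
    define W where "W = {v\<in>V. u v > 0}"
    have WV: "W \<subseteq> V" unfolding W_def by auto
    have zero: "\<forall>v\<in>V - W. u v = 0" using u0 unfolding W_def by force
    have "sum u W = 1"
      using u1 sum.mono_neutral_right[OF fin WV, of u] zero by simp
    moreover have "(\<Sum>v\<in>W. u v *\<^sub>R v) = x"
      using ux sum.mono_neutral_right[OF fin WV, of "\<lambda>v. u v *\<^sub>R v"] zero by simp
    moreover have "\<forall>v\<in>W. u v > 0" unfolding W_def by simp
    moreover have "\<not> affine_dependent W" using indep WV by (rule affine_independent_subset)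
    ultimately have "x \<in> rel_interior (convex hull W)" and "W \<noteq> {}"
      by (auto simp: rel_interior_convex_hull_explicit)
    then show "x \<in> (\<Union>W\<in>{W. W \<subseteq> V \<and> W \<noteq> {}}. rel_interior (convex hull W))"
      using WV by blast
  qed
  show "(\<Union>W\<in>{W. W \<subseteq> V \<and> W \<noteq> {}}. rel_interior (convex hull W)) \<subseteq> convex hull V"
    using rel_interior_subset hull_mono by blast
qed

lemma geom_simplicial_complexD:
  assumes "geom_simplicial_complex K"
  shows "finite K"
    and "V \<in> K \<Longrightarrow> \<not> affine_dependent V" "V \<in> K \<Longrightarrow> V \<noteq> {}"
    and "V \<in> K \<Longrightarrow> W \<subseteq> V \<Longrightarrow> W \<noteq> {} \<Longrightarrow> W \<in> K"
    and "V \<in> K \<Longrightarrow> W \<in> K \<Longrightarrow> convex hull V \<inter> convex hull W = convex hull (V \<inter> W)"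
  using assms unfolding geom_simplicial_complex_def by blast+

lemma face_eq_simplex_if_meets_rel_interior:
  fixes V W :: "'a::euclidean_space set"
  assumes indep: "\<not> affine_dependent V" and WV: "W \<subseteq> V"
    and x: "x \<in> convex hull W" "x \<in> rel_interior (convex hull V)"
  shows "convex hull W = convex hull V"
proof (rule ccontr)
  assume "convex hull W \<noteq> convex hull V"
  moreover have "convex hull W face_of convex hull V"
    using face_of_convex_hull_affine_independent[OF indep] WV by blast
  ultimately show False
    using face_of_disjoint_rel_interior x by blast
qed

text \<open>Distinct simplices of a complex have disjoint relative interiors: a common point
  would lie in the face spanned by \<open>V \<inter> W\<close>, forcing both simplices to equal that face,
  and a simplex determines its vertex set (its extreme points).\<close>

lemma complex_rel_interiors_disjoint:
  assumes K: "geom_simplicial_complex K" and V: "V \<in> K" and W: "W \<in> K"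
    and x: "x \<in> rel_interior (convex hull V)" "x \<in> rel_interior (convex hull W)"
  shows "V = W"
proof -
  note KD = geom_simplicial_complexD[OF K]
  have "x \<in> convex hull (V \<inter> W)"
    using x rel_interior_subset KD(5)[OF V W] by blast
  then have "convex hull (V \<inter> W) = convex hull V" "convex hull (V \<inter> W) = convex hull W"
    using face_eq_simplex_if_meets_rel_interior[OF KD(2)[OF V], of "V \<inter> W"]
      face_eq_simplex_if_meets_rel_interior[OF KD(2)[OF W], of "V \<inter> W"] x by auto
  then have "convex hull V = convex hull W" by simp
  moreover have "U = {p. p extreme_point_of convex hull U}" if "U \<in> K" for U
    using extreme_point_of_convex_hull_affine_independent[OF KD(2)[OF that]] by simp
  ultimately show "V = W" using V W by metis
qed

lemma underlying_space_rel_interiors: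
  assumes K: "geom_simplicial_complex K"
  shows "underlying_space K = (\<Union>V\<in>K. rel_interior (convex hull V))"
proof -
  note KD = geom_simplicial_complexD[OF K]
  have "convex hull V \<subseteq> (\<Union>V\<in>K. rel_interior (convex hull V))" if "V \<in> K" for V
    using convex_hull_Union_rel_interior_faces[OF KD(2)[OF that]] KD(4)[OF that] by blast
  then show ?thesis
    unfolding underlying_space_def using rel_interior_subset by blast
qed

lemma int_lattice_lincomb:
  fixes V :: "(real^'d) set"
  assumes "V \<subseteq> int_lattice" "\<And>v. v \<in> V \<Longrightarrow> r v \<in> \<int>"
  shows "(\<Sum>v\<in>V. r v *\<^sub>R v) \<in> int_lattice"
  using assms unfolding int_lattice_def by (auto intro!: Ints_sum Ints_mult)

lemma int_lattice_add: "x \<in> int_lattice \<Longrightarrow> y \<in> int_lattice \<Longrightarrow> x + y \<in> int_lattice"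
  unfolding int_lattice_def by auto

lemma int_lattice_diff: "x \<in> int_lattice \<Longrightarrow> y \<in> int_lattice \<Longrightarrow> x - y \<in> int_lattice"
  unfolding int_lattice_def by auto

lemma finite_int_lattice_bounded:
  fixes S :: "(real^'d) set"
  assumes "bounded S"
  shows "finite (int_lattice \<inter> S)"
proof -
  obtain B where B: "\<And>x. x \<in> S \<Longrightarrow> norm x \<le> B" using assms bounded_iff by blast
  have "vec_nth ` (int_lattice \<inter> S) \<subseteq> (UNIV::'d set) \<rightarrow>\<^sub>E {r \<in> \<int>. \<bar>r\<bar> \<le> B}"
  proof
    fix f assume "f \<in> vec_nth ` (int_lattice \<inter> S)"
    then obtain x where x: "x \<in> int_lattice" "x \<in> S" and f: "f = vec_nth x" by auto
    have "\<bar>x $ i\<bar> \<le> B" for i using component_le_norm_cart B[OF x(2)] order_trans by blast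
    then show "f \<in> (UNIV::'d set) \<rightarrow>\<^sub>E {r \<in> \<int>. \<bar>r\<bar> \<le> B}"
      using x f unfolding int_lattice_def by auto
  qed
  moreover have "finite ((UNIV::'d set) \<rightarrow>\<^sub>E {r \<in> \<int>. \<bar>r\<bar> \<le> B})"
    by (intro finite_PiE finite_abs_int_segment) auto
  moreover have "inj_on vec_nth (int_lattice \<inter> S)" by (simp add: inj_on_def vec_eq_iff)
  ultimately show ?thesis by (meson finite_imageD finite_subset)
qed

text \<open>These are the barycentric
  coordinates, scaled by \<open>t\<close>, of the lattice points of the dilated open simplex.\<close>

definition lattice_weights :: "(real^'d) set \<Rightarrow> nat \<Rightarrow> ((real^'d) \<Rightarrow> real) set" where
  "lattice_weights V t = {c \<in> V \<rightarrow>\<^sub>E UNIV. (\<forall>v\<in>V. 0 < c v) \<and> sum c V = real t \<and>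
      (\<Sum>v\<in>V. c v *\<^sub>R v) \<in> int_lattice}"

lemma lattice_points_dilated_open_simplex:
  fixes V :: "(real^'d) set"
  assumes indep: "\<not> affine_dependent V" and t: "t > 0"
  shows "int_lattice \<inter> (\<lambda>x. real t *\<^sub>R x) ` rel_interior (convex hull V)
           = (\<lambda>c. \<Sum>v\<in>V. c v *\<^sub>R v) ` lattice_weights V t"
proof
  show "int_lattice \<inter> (\<lambda>x. real t *\<^sub>R x) ` rel_interior (convex hull V)
          \<subseteq> (\<lambda>c. \<Sum>v\<in>V. c v *\<^sub>R v) ` lattice_weights V t"
  proof
    fix y assume "y \<in> int_lattice \<inter> (\<lambda>x. real t *\<^sub>R x) ` rel_interior (convex hull V)"
    then obtain u where y: "y \<in> int_lattice" "y = real t *\<^sub>R (\<Sum>v\<in>V. u v *\<^sub>R v)"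
      and u: "\<forall>v\<in>V. 0 < u v" "sum u V = 1"
      by (auto simp: rel_interior_convex_hull_explicit[OF indep])
    define c where "c = (\<lambda>v\<in>V. real t * u v)"
    have "(\<Sum>v\<in>V. c v *\<^sub>R v) = y"
      unfolding y(2) c_def scaleR_sum_right by (intro sum.cong) auto
    moreover have "sum c V = real t"
      using u(2) unfolding c_def by (simp add: sum_distrib_left[symmetric])
    ultimately have "c \<in> lattice_weights V t"
      using u(1) y(1) t unfolding lattice_weights_def c_def by auto
    then show "y \<in> (\<lambda>c. \<Sum>v\<in>V. c v *\<^sub>R v) ` lattice_weights V t"
      using \<open>(\<Sum>v\<in>V. c v *\<^sub>R v) = y\<close> by blast
  qed
  show "(\<lambda>c. \<Sum>v\<in>V. c v *\<^sub>R v) ` lattice_weights V t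
          \<subseteq> int_lattice \<inter> (\<lambda>x. real t *\<^sub>R x) ` rel_interior (convex hull V)"
  proof
    fix y assume "y \<in> (\<lambda>c. \<Sum>v\<in>V. c v *\<^sub>R v) ` lattice_weights V t"
    then obtain c where y: "y = (\<Sum>v\<in>V. c v *\<^sub>R v)" and c: "c \<in> lattice_weights V t" by blast
    have "(\<Sum>v\<in>V. (c v / real t) *\<^sub>R v) \<in> rel_interior (convex hull V)"
      using c t unfolding rel_interior_convex_hull_explicit[OF indep] lattice_weights_def
      by (auto simp: sum_divide_distrib[symmetric] intro!: exI[of _ "\<lambda>v. c v / real t"])
    moreover have "y = real t *\<^sub>R (\<Sum>v\<in>V. (c v / real t) *\<^sub>R v)"
      unfolding y scaleR_sum_right using t by (intro sum.cong) auto
    moreover have "y \<in> int_lattice" using c y unfolding lattice_weights_def by simp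
    ultimately show "y \<in> int_lattice \<inter> (\<lambda>x. real t *\<^sub>R x) ` rel_interior (convex hull V)"
      by blast
  qed
qed

text \<open>The correspondence is bijective by uniqueness of barycentric coordinates.\<close>

lemma card_lattice_points_dilated_open_simplex:
  fixes V :: "(real^'d) set"
  assumes indep: "\<not> affine_dependent V" and t: "t > 0"
  shows "card (int_lattice \<inter> (\<lambda>x. real t *\<^sub>R x) ` rel_interior (convex hull V))
           = card (lattice_weights V t)"
proof -
  have "inj_on (\<lambda>c. \<Sum>v\<in>V. c v *\<^sub>R v) (lattice_weights V t)"
  proof (rule inj_onI)
    fix a b assume a: "a \<in> lattice_weights V t" and b: "b \<in> lattice_weights V t"
      and eq: "(\<Sum>v\<in>V. a v *\<^sub>R v) = (\<Sum>v\<in>V. b v *\<^sub>R v)"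
    have "a v = b v" if "v \<in> V" for v
      using barycentric_coords_unique[OF aff_independent_finite[OF indep] indep _ eq that] a b
      unfolding lattice_weights_def by simp
    then show "a = b" using a b unfolding lattice_weights_def by (auto intro: PiE_ext)
  qed
  then show ?thesis
    unfolding lattice_points_dilated_open_simplex[OF indep t] by (rule card_image)
qed

text \<open>Fundamental weights: coefficient vectors in \<open>(0,1]^V\<close> with integral sum whose
  combination of the vertices is a lattice point, i.e. the lattice points of the half-open
  fundamental parallelepiped of the cone over \<open>V \<times> {1}\<close>.  Their (integral) sum is
  their height.\<close>

definition fundamental_weights :: "(real^'d) set \<Rightarrow> ((real^'d) \<Rightarrow> real) set" where
  "fundamental_weights V = {\<mu> \<in> V \<rightarrow>\<^sub>E UNIV. (\<forall>v\<in>V. 0 < \<mu> v \<and> \<mu> v \<le> 1) \<and> sum \<mu> V \<in> \<int> \<and>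
      (\<Sum>v\<in>V. \<mu> v *\<^sub>R v) \<in> int_lattice}"

definition height :: "'a set \<Rightarrow> ('a \<Rightarrow> real) \<Rightarrow> nat" where
  "height V \<mu> = nat \<lfloor>sum \<mu> V\<rfloor>"

text \<open>There are finitely many fundamental weights: they inject into the lattice points of
  a ball, paired with a bounded integer.\<close>

lemma finite_fundamental_weights:
  fixes V :: "(real^'d) set"
  assumes indep: "\<not> affine_dependent V"
  shows "finite (fundamental_weights V)"
proof -
  have fin: "finite V" using indep by (rule aff_independent_finite)
  define B where "B = (\<Sum>v\<in>V. norm v)"
  let ?g = "\<lambda>\<mu>. ((\<Sum>v\<in>V. \<mu> v *\<^sub>R v), sum \<mu> V)"
  let ?P = "int_lattice \<inter> cball (0::real^'d) B"
  let ?H = "{r \<in> \<int>. \<bar>r\<bar> \<le> real (card V)}"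
  have "?g ` fundamental_weights V \<subseteq> ?P \<times> ?H"
  proof (rule image_subsetI)
    fix \<mu> assume "\<mu> \<in> fundamental_weights V"
    then have \<mu>: "\<And>v. v \<in> V \<Longrightarrow> 0 < \<mu> v \<and> \<mu> v \<le> 1" "sum \<mu> V \<in> \<int>"
      "(\<Sum>v\<in>V. \<mu> v *\<^sub>R v) \<in> int_lattice"
      unfolding fundamental_weights_def by auto
    have "norm (\<Sum>v\<in>V. \<mu> v *\<^sub>R v) \<le> (\<Sum>v\<in>V. norm (\<mu> v *\<^sub>R v))" by (rule norm_sum)
    also have "\<dots> \<le> B"
      unfolding B_def using \<mu>(1) by (intro sum_mono) (simp add: mult_left_le_one_le less_imp_le)
    finally have "(\<Sum>v\<in>V. \<mu> v *\<^sub>R v) \<in> ?P" using \<mu>(3) by simp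
    moreover have "0 \<le> sum \<mu> V" by (rule sum_nonneg) (use \<mu>(1) in force)
    moreover have "sum \<mu> V \<le> (\<Sum>v\<in>V. 1)" by (rule sum_mono) (use \<mu>(1) in force)
    ultimately show "?g \<mu> \<in> ?P \<times> ?H" using \<mu>(2) by simp
  qed
  moreover have "finite (?P \<times> ?H)"
    using finite_int_lattice_bounded[OF bounded_cball] finite_abs_int_segment by blast
  moreover have "inj_on ?g (fundamental_weights V)"
  proof (rule inj_onI)
    fix a b assume a: "a \<in> fundamental_weights V" and b: "b \<in> fundamental_weights V"
      and eq: "?g a = ?g b"
    have "a v = b v" if "v \<in> V" for v
      using barycentric_coords_unique[OF fin indep, of a b v] eq that by simp
    then show "a = b" using a b unfolding fundamental_weights_def by (auto intro: PiE_ext)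
  qed
  ultimately show ?thesis by (meson finite_imageD finite_subset)
qed

lemma height_fundamental_weight:
  assumes fin: "finite V" and ne: "V \<noteq> {}" and \<mu>: "\<mu> \<in> fundamental_weights V"
  shows "real (height V \<mu>) = sum \<mu> V" and "1 \<le> height V \<mu>" and "height V \<mu> \<le> card V"
proof -
  have b: "\<And>v. v \<in> V \<Longrightarrow> 0 < \<mu> v \<and> \<mu> v \<le> 1" and "sum \<mu> V \<in> \<int>"
    using \<mu> unfolding fundamental_weights_def by blast+
  then obtain z where z: "sum \<mu> V = of_int z" by (auto elim: Ints_cases)
  have "0 < sum \<mu> V" using fin ne b by (intro sum_pos) auto
  then have "1 \<le> z" using z by simp
  then show h: "real (height V \<mu>) = sum \<mu> V" and "1 \<le> height V \<mu>"
    unfolding height_def z by simp_all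
  have "sum \<mu> V \<le> (\<Sum>v\<in>V. 1)" using b by (intro sum_mono) auto
  then show "height V \<mu> \<le> card V" using h by simp
qed

lemma one_fundamental_weight:
  fixes V :: "(real^'d) set"
  assumes "V \<subseteq> int_lattice"
  shows "(\<lambda>v\<in>V. 1) \<in> fundamental_weights V"
proof -
  have "(\<Sum>v\<in>V. (\<lambda>v\<in>V. 1::real) v *\<^sub>R v) = (\<Sum>v\<in>V. (1::real) *\<^sub>R v)" by (intro sum.cong) auto
  also have "\<dots> \<in> int_lattice" using assms by (rule int_lattice_lincomb) simp
  finally show ?thesis unfolding fundamental_weights_def by simp
qed

lemma fundamental_weight_max_height:
  assumes fin: "finite V" and ne: "V \<noteq> {}" and \<mu>: "\<mu> \<in> fundamental_weights V"
    and h: "height V \<mu> = card V"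
  shows "\<mu> = (\<lambda>v\<in>V. 1)"
proof (rule PiE_ext)
  have b: "\<And>v. v \<in> V \<Longrightarrow> \<mu> v \<le> 1" using \<mu> unfolding fundamental_weights_def by blast
  have "(\<Sum>v\<in>V. 1 - \<mu> v) = 0"
    using height_fundamental_weight(1)[OF fin ne \<mu>] h by (simp add: sum_subtractf)
  then have "\<forall>v\<in>V. 1 - \<mu> v = 0" using b by (subst (asm) sum_nonneg_eq_0_iff[OF fin]) auto
  then show "\<mu> v = (\<lambda>v\<in>V. 1) v" if "v \<in> V" for v using that by simp
  show "\<mu> \<in> V \<rightarrow>\<^sub>E UNIV" using \<mu> unfolding fundamental_weights_def by blast
qed simp

text \<open>Every positive weight splits uniquely as \<open>c = \<mu> + m\<close> with \<open>\<mu>\<close> in \<open>(0,1]\<close> and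
  \<open>m\<close> natural: \<open>m v = \<lceil>c v\<rceil> - 1\<close>.  For lattice weights of total \<open>N\<close> the part \<open>\<mu>\<close> is a
  fundamental weight and \<open>m\<close> a weak composition of \<open>N - height V \<mu>\<close>.\<close>

definition join_weights :: "'a set \<Rightarrow> ('a \<Rightarrow> real) \<Rightarrow> ('a \<Rightarrow> nat) \<Rightarrow> ('a \<Rightarrow> real)" where
  "join_weights V \<mu> m = (\<lambda>v\<in>V. \<mu> v + real (m v))"

definition frac_weights :: "'a set \<Rightarrow> ('a \<Rightarrow> real) \<Rightarrow> ('a \<Rightarrow> real)" where
  "frac_weights V c = (\<lambda>v\<in>V. c v - of_int (\<lceil>c v\<rceil> - 1))"

definition int_weights :: "'a set \<Rightarrow> ('a \<Rightarrow> real) \<Rightarrow> ('a \<Rightarrow> nat)" where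
  "int_weights V c = (\<lambda>v\<in>V. nat (\<lceil>c v\<rceil> - 1))"

lemma join_weights_in_lattice_weights:
  fixes V :: "(real^'d) set"
  assumes fin: "finite V" and ne: "V \<noteq> {}" and lat: "V \<subseteq> int_lattice" and VN: "card V \<le> N"
    and \<mu>: "\<mu> \<in> fundamental_weights V" and m: "m \<in> weak_compositions V (N - height V \<mu>)"
  shows "join_weights V \<mu> m \<in> lattice_weights V N"
proof -
  have \<mu>pos: "\<And>v. v \<in> V \<Longrightarrow> 0 < \<mu> v" and \<mu>lat: "(\<Sum>v\<in>V. \<mu> v *\<^sub>R v) \<in> int_lattice"
    using \<mu> unfolding fundamental_weights_def by blast+
  have sm: "sum m V = N - height V \<mu>" using m unfolding weak_compositions_def by blast
  note h = height_fundamental_weight[OF fin ne \<mu>]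
  define c where "c = join_weights V \<mu> m"
  have cv: "\<And>v. v \<in> V \<Longrightarrow> c v = \<mu> v + real (m v)" unfolding c_def join_weights_def by simp
  have "sum c V = sum \<mu> V + real (sum m V)" by (simp add: cv sum.distrib)
  also have "\<dots> = real N" using sm h VN by (simp add: of_nat_diff)
  finally have "sum c V = real N" .
  moreover have "(\<Sum>v\<in>V. c v *\<^sub>R v) = (\<Sum>v\<in>V. \<mu> v *\<^sub>R v) + (\<Sum>v\<in>V. real (m v) *\<^sub>R v)"
    by (simp add: cv scaleR_add_left sum.distrib)
  then have "(\<Sum>v\<in>V. c v *\<^sub>R v) \<in> int_lattice"
    using int_lattice_add[OF \<mu>lat int_lattice_lincomb[OF lat]] by simp
  moreover have "\<forall>v\<in>V. 0 < c v" using \<mu>pos cv by (simp add: add_pos_nonneg)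
  ultimately show ?thesis
    unfolding c_def[symmetric] lattice_weights_def by (simp add: c_def join_weights_def)
qed

lemma frac_int_weights_in:
  fixes V :: "(real^'d) set"
  assumes fin: "finite V" and ne: "V \<noteq> {}" and lat: "V \<subseteq> int_lattice"
    and c: "c \<in> lattice_weights V N"
  shows "frac_weights V c \<in> fundamental_weights V"
    and "int_weights V c \<in> weak_compositions V (N - height V (frac_weights V c))"
proof -
  have cpos: "\<And>v. v \<in> V \<Longrightarrow> 0 < c v" and cs: "sum c V = real N"
    and clat: "(\<Sum>v\<in>V. c v *\<^sub>R v) \<in> int_lattice"
    using c unfolding lattice_weights_def by blast+
  define \<mu> where "\<mu> = frac_weights V c"
  define m where "m = int_weights V c"
  have split: "\<And>v. v \<in> V \<Longrightarrow> c v = \<mu> v + real (m v)"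
    using cpos unfolding \<mu>_def m_def frac_weights_def int_weights_def by simp
  have \<mu>01: "\<forall>v\<in>V. 0 < \<mu> v \<and> \<mu> v \<le> 1"
    unfolding \<mu>_def frac_weights_def by (simp add: ceiling_correct)
  have "sum c V = sum \<mu> V + real (sum m V)" by (simp add: split sum.distrib)
  then have s\<mu>: "sum \<mu> V = real N - real (sum m V)" using cs by simp
  then have "sum \<mu> V \<in> \<int>" by (simp only: Ints_diff Ints_of_nat)
  moreover have "(\<Sum>v\<in>V. \<mu> v *\<^sub>R v) = (\<Sum>v\<in>V. c v *\<^sub>R v) - (\<Sum>v\<in>V. real (m v) *\<^sub>R v)"
    by (simp add: split scaleR_add_left sum.distrib)
  then have "(\<Sum>v\<in>V. \<mu> v *\<^sub>R v) \<in> int_lattice"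
    using int_lattice_diff[OF clat int_lattice_lincomb[OF lat]] by simp
  ultimately have \<mu>f: "\<mu> \<in> fundamental_weights V"
    using \<mu>01 unfolding fundamental_weights_def \<mu>_def frac_weights_def by simp
  then show "frac_weights V c \<in> fundamental_weights V" unfolding \<mu>_def .
  have "sum m V = N - height V \<mu>"
    using s\<mu> height_fundamental_weight(1)[OF fin ne \<mu>f] by linarith
  then show "int_weights V c \<in> weak_compositions V (N - height V (frac_weights V c))"
    unfolding m_def[symmetric] \<mu>_def[symmetric] weak_compositions_def
    by (simp add: m_def int_weights_def)
qed

lemma frac_int_join_weights:
  assumes \<mu>: "\<mu> \<in> fundamental_weights V" and m: "m \<in> weak_compositions V s"
  shows "frac_weights V (join_weights V \<mu> m) = \<mu>" and "int_weights V (join_weights V \<mu> m) = m"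
proof -
  have \<mu>01: "\<And>v. v \<in> V \<Longrightarrow> 0 < \<mu> v \<and> \<mu> v \<le> 1" and \<mu>E: "\<mu> \<in> V \<rightarrow>\<^sub>E UNIV"
    using \<mu> unfolding fundamental_weights_def by blast+
  have mE: "m \<in> V \<rightarrow>\<^sub>E UNIV" using m unfolding weak_compositions_def by blast
  have ceil: "\<lceil>\<mu> v + real (m v)\<rceil> = int (m v) + 1" if "v \<in> V" for v
    by (rule ceiling_unique) (use \<mu>01[OF that] in simp_all)
  show "frac_weights V (join_weights V \<mu> m) = \<mu>"
    by (rule PiE_ext[OF _ \<mu>E]) (simp_all add: frac_weights_def join_weights_def ceil)
  show "int_weights V (join_weights V \<mu> m) = m"
    by (rule PiE_ext[OF _ mE]) (simp_all add: int_weights_def join_weights_def ceil)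
qed

lemma join_frac_int_weights:
  assumes "c \<in> lattice_weights V N"
  shows "join_weights V (frac_weights V c) (int_weights V c) = c"
proof (rule PiE_ext)
  show "c \<in> V \<rightarrow>\<^sub>E UNIV" using assms unfolding lattice_weights_def by blast
  fix v assume v: "v \<in> V"
  then have "1 \<le> \<lceil>c v\<rceil>" using assms unfolding lattice_weights_def by auto
  then show "join_weights V (frac_weights V c) (int_weights V c) v = c v"
    using v by (simp add: join_weights_def frac_weights_def int_weights_def)
qed (simp add: join_weights_def)

lemma card_lattice_weights:
  fixes V :: "(real^'d) set"
  assumes indep: "\<not> affine_dependent V" and ne: "V \<noteq> {}" and lat: "V \<subseteq> int_lattice"
    and VN: "card V \<le> N"
  shows "card (lattice_weights V N)
           = (\<Sum>\<mu>\<in>fundamental_weights V. card (weak_compositions V (N - height V \<mu>)))"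
proof -
  have fin: "finite V" using indep by (rule aff_independent_finite)
  let ?S = "SIGMA \<mu>:fundamental_weights V. weak_compositions V (N - height V \<mu>)"
  have "bij_betw (\<lambda>(\<mu>, m). join_weights V \<mu> m) ?S (lattice_weights V N)"
  proof (rule bij_betw_byWitness[where f'="\<lambda>c. (frac_weights V c, int_weights V c)"])
    show "\<forall>p\<in>?S. (\<lambda>c. (frac_weights V c, int_weights V c)) ((\<lambda>(\<mu>, m). join_weights V \<mu> m) p) = p"
      using frac_int_join_weights by fastforce
    show "\<forall>c\<in>lattice_weights V N. (\<lambda>(\<mu>, m). join_weights V \<mu> m) (frac_weights V c, int_weights V c) = c"
      using join_frac_int_weights by auto
    show "(\<lambda>(\<mu>, m). join_weights V \<mu> m) ` ?S \<subseteq> lattice_weights V N"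
      using join_weights_in_lattice_weights[OF fin ne lat VN] by auto
    show "(\<lambda>c. (frac_weights V c, int_weights V c)) ` lattice_weights V N \<subseteq> ?S"
      using frac_int_weights_in[OF fin ne lat] by blast
  qed
  then have "card (lattice_weights V N) = card ?S" by (simp add: bij_betw_same_card)
  also have "\<dots> = (\<Sum>\<mu>\<in>fundamental_weights V. card (weak_compositions V (N - height V \<mu>)))"
    using finite_fundamental_weights[OF indep] finite_weak_compositions[OF fin] by (intro card_SigmaI) auto
  finally show ?thesis .
qed

text \<open>If \<open>n \<cdot> (card V - 1)!\<close> divides \<open>N\<close>, every fundamental weight except the all-ones
  weight contributes a multiple of \<open>n\<close>, and the all-ones weight contributes
  \<open>(-1)^(card V - 1)\<close> modulo \<open>n\<close>.\<close>

lemma card_lattice_weights_mod: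
  fixes V :: "(real^'d) set"
  assumes indep: "\<not> affine_dependent V" and ne: "V \<noteq> {}" and lat: "V \<subseteq> int_lattice"
    and dvd: "n * fact (card V - 1) dvd N" and VN: "card V \<le> N"
  shows "int (card (lattice_weights V N)) mod int n = (-1) ^ (card V - 1) mod int n"
proof -
  have fin: "finite V" using indep by (rule aff_independent_finite)
  define k where "k = card V - 1"
  have cardV: "card V = k + 1" using fin ne unfolding k_def by (simp add: card_gt_0_iff)
  define F where "F \<mu> = int (card (weak_compositions V (N - height V \<mu>)))" for \<mu>
  define one where "one = (\<lambda>v\<in>V. 1::real)"
  have F_mod: "F \<mu> mod int n = (if \<mu> = one then (-1) ^ k else 0) mod int n"
    if \<mu>: "\<mu> \<in> fundamental_weights V" for \<mu>
  proof -
    note h = height_fundamental_weight[OF fin ne \<mu>]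
    have "card (weak_compositions V (N - height V \<mu>)) = (N + k - height V \<mu>) choose k"
      using card_weak_compositions[OF fin ne] binomial_symmetric[of k "N + k - height V \<mu>"]
        h(3) VN cardV by simp
    moreover have "height V \<mu> = k + 1 \<longleftrightarrow> \<mu> = one"
      using fundamental_weight_max_height[OF fin ne \<mu>] height_fundamental_weight(1)[OF fin ne]
        one_fundamental_weight[OF lat] cardV unfolding one_def by force
    ultimately show ?thesis
      unfolding F_def using binomial_congruence[OF h(2) _ dvd[folded k_def]] h(3) cardV VN
      by simp
  qed
  have one: "one \<in> fundamental_weights V" unfolding one_def by (rule one_fundamental_weight[OF lat])
  have "int (card (lattice_weights V N)) = (\<Sum>\<mu>\<in>fundamental_weights V. F \<mu>)"
    unfolding card_lattice_weights[OF indep ne lat VN] F_def by simp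
  also have "\<dots> mod int n = (\<Sum>\<mu>\<in>fundamental_weights V. if \<mu> = one then (-1) ^ k else 0) mod int n"
    using F_mod by (rule sum_mod_cong)
  also have "\<dots> = (-1) ^ k mod int n"
    using finite_fundamental_weights[OF indep] one by (simp add: sum.delta')
  finally show ?thesis unfolding k_def .
qed

lemma lattice_points_dilated_open_simplex_mod:
  fixes V :: "(real^'d) set"
  assumes indep: "\<not> affine_dependent V" and ne: "V \<noteq> {}" and lat: "V \<subseteq> int_lattice"
    and dvd: "n * fact (card V - 1) dvd t" and Vt: "card V \<le> t"
  shows "int (card (int_lattice \<inter> (\<lambda>x. real t *\<^sub>R x) ` rel_interior (convex hull V))) mod int n
           = (-1) ^ (card V - 1) mod int n"
proof -
  have "card V > 0" using ne aff_independent_finite[OF indep] by (simp add: card_gt_0_iff)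
  then have "t > 0" using Vt by linarith
  then show ?thesis
    using card_lattice_points_dilated_open_simplex[OF indep] card_lattice_weights_mod[OF assms]
    by simp
qed

lemma card_lattice_points_dilated_complex:
  fixes K :: "(real^'d) set set"
  assumes K: "geom_simplicial_complex K" and t: "t > 0"
  shows "card (int_lattice \<inter> (\<lambda>x. real t *\<^sub>R x) ` underlying_space K)
           = (\<Sum>V\<in>K. card (int_lattice \<inter> (\<lambda>x. real t *\<^sub>R x) ` rel_interior (convex hull V)))"
proof -
  note KD = geom_simplicial_complexD[OF K]
  let ?P = "\<lambda>V. int_lattice \<inter> (\<lambda>x. real t *\<^sub>R x) ` rel_interior (convex hull V)"
  have union: "int_lattice \<inter> (\<lambda>x. real t *\<^sub>R x) ` underlying_space K = (\<Union>V\<in>K. ?P V)"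
    by (simp only: underlying_space_rel_interiors[OF K] image_UN Int_UN_distrib)
  have fin: "finite (?P V)" if "V \<in> K" for V
  proof (rule finite_int_lattice_bounded)
    have "bounded (convex hull V)"
      by (rule finite_imp_bounded_convex_hull[OF aff_independent_finite[OF KD(2)[OF that]]])
    then show "bounded ((\<lambda>x. real t *\<^sub>R x) ` rel_interior (convex hull V))"
      by (intro bounded_scaling bounded_subset[OF _ rel_interior_subset])
  qed
  have disj: "?P V \<inter> ?P W = {}" if V: "V \<in> K" and W: "W \<in> K" and "V \<noteq> W" for V W
  proof -
    have "V = W" if "y \<in> ?P V" "y \<in> ?P W" for y
    proof -
      from that obtain x x' where "x \<in> rel_interior (convex hull V)"
        "x' \<in> rel_interior (convex hull W)" "real t *\<^sub>R x = real t *\<^sub>R x'" by auto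
      then show "V = W" using complex_rel_interiors_disjoint[OF K V W] t by simp
    qed
    then show ?thesis using \<open>V \<noteq> W\<close> by blast
  qed
  show ?thesis
    unfolding union by (rule card_UN_disjoint[OF KD(1)]) (use fin disj in blast)+
qed

lemma card_affine_independent_le:
  fixes V :: "'a::euclidean_space set"
  assumes "\<not> affine_dependent V"
  shows "card V \<le> DIM('a) + 1"
  using affine_dependent_biggerset[OF aff_independent_finite[OF assms]] assms by linarith

lemma Suc_le_mult_fact:
  assumes "n > 1"
  shows "d + 1 \<le> n * fact d"
proof -
  have "d + 1 \<le> 2 * fact d" using fact_ge_self[of d] fact_ge_1[where 'a=nat, of d] by linarith
  also have "\<dots> \<le> n * fact d" using assms by (intro mult_right_mono) simp_all
  finally show ?thesis .
qed

text \<open>Main theorem: \<open>t = n \<cdot> d!\<close> works, since every simplex has at most \<open>d + 1\<close> vertices.\<close>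

theorem theorem1:
  fixes n :: nat
  assumes "n > 1"
  shows "\<exists>t::nat. t > 0 \<and>
    (\<forall>K :: (real^'d) set set.
       geom_simplicial_complex K \<and> (\<forall>V\<in>K. V \<subseteq> int_lattice) \<longrightarrow>
       int (card (int_lattice \<inter> ((\<lambda>x. real t *\<^sub>R x) ` underlying_space K))) mod int n
          = euler_char K mod int n)"
proof (intro exI conjI allI impI)
  define D where "D = DIM(real^'d)"
  define t where "t = n * fact D"
  show t: "t > 0" unfolding t_def using assms by simp
  fix K :: "(real^'d) set set"
  assume "geom_simplicial_complex K \<and> (\<forall>V\<in>K. V \<subseteq> int_lattice)"
  then have K: "geom_simplicial_complex K" and lat: "\<And>V. V \<in> K \<Longrightarrow> V \<subseteq> int_lattice" by blast+
  note KD = geom_simplicial_complexD[OF K]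
  have "int (card (int_lattice \<inter> (\<lambda>x. real t *\<^sub>R x) ` rel_interior (convex hull V))) mod int n
          = (-1) ^ (card V - 1) mod int n" if V: "V \<in> K" for V
  proof (rule lattice_points_dilated_open_simplex_mod[OF KD(2,3)[OF V] lat[OF V]])
    have "card V \<le> D + 1"
      unfolding D_def by (rule card_affine_independent_le[OF KD(2)[OF V]])
    then show "n * fact (card V - 1) dvd t" and "card V \<le> t"
      using Suc_le_mult_fact[OF assms, of D] unfolding t_def by (simp_all add: fact_dvd)
  qed
  then show "int (card (int_lattice \<inter> (\<lambda>x. real t *\<^sub>R x) ` underlying_space K)) mod int n
               = euler_char K mod int n"
    unfolding card_lattice_points_dilated_complex[OF K t] euler_char_def of_nat_sum
    by (rule sum_mod_cong)
qed

end
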